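(* Let $k\ge5$ and let $E$ be a set with $\{0,1,2,k\}\subseteq E\subset\{0,1,\ldots,k\}$ and $|E|=k$ (so exactly one element of $\{3,\ldots,k-1\}$ is missing from $E$). Then the number of $\tau\in\mathcal{S}_k$ with $\mathcal{J}(\tau)=E$ equals $2^{k-3}$ if $k-1\notin E$, and $2^{k-4}$ if $k-1\in E$.
   Context: The pattern of a word of $j$ distinct letters is its order-preserving relabeling by $\{1,\ldots,j\}$; the length-$j$ initial pattern of $\tau$ is the pattern of $\tau_1\ldots\tau_j$. The $j$-set $\mathcal{J}(\tau)$ of $\tau\in\mathcal{S}_k$ is the set consisting of $0$ together with all $j\in\{1,\ldots,k\}$ such that the length-$j$ initial pattern of $\tau$ is an involution in $\mathcal{S}_j$. *)

theory Defs
  imports "HOL-Combinatorics.Permutations"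
begin

text \<open>The length-j initial pattern of tau is the order-preserving relabelling of
  tau 1 ... tau j by 1..j: position i is sent to the rank of tau i among
  tau 1, ..., tau j.\<close>

definition init_pattern :: "(nat \<Rightarrow> nat) \<Rightarrow> nat \<Rightarrow> nat \<Rightarrow> nat" where
  "init_pattern \<tau> j i = (if i \<in> {1..j} then card {l \<in> {1..j}. \<tau> l \<le> \<tau> i} else i)"

definition is_involution_on :: "(nat \<Rightarrow> nat) \<Rightarrow> nat set \<Rightarrow> bool" where
  "is_involution_on \<sigma> A \<longleftrightarrow> (\<forall>i\<in>A. \<sigma> (\<sigma> i) = i)"

definition jset :: "nat \<Rightarrow> (nat \<Rightarrow> nat) \<Rightarrow> nat set" where
  "jset k \<tau> = {0} \<union> {j \<in> {1..k}. init_pattern \<tau> j permutes {1..j}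
                               \<and> is_involution_on (init_pattern \<tau> j) {1..j}}"

end

theory Submission
  imports Defs
begin

(* Every permutation of {1..n+1} arises uniquely by appending a last value r to a permutation
   sigma of {1..n} and bumping the values >= r up by one; its initial patterns of length at most n
   are those of sigma, so the j-set grows by n+1 exactly when the extension is an involution.
   For an involution sigma the extension is again one iff r = n+1, or r = sigma n and sigma
   reverses the positions sigma n..n; and an involution has the latter property iff its initial
   pattern of length n-1 is an involution as well. Hence, if n and n+1 lie in E, a permutation
   whose j-set is E restricted to {0..n} has two or one admissible extensions according as n-1
   lies in E or not. This gives 2^(n-1) permutations of {1..n} with full j-set, and beyond the
   missing index m the count doubles at every step but the first. At the gap itself, a
   permutation of {1..m+1} with j-set {0..m+1} - {m} arises by two consecutive extensions from a
   permutation of {1..m-1} with full j-set, and each of these admits exactly one such pair of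
   extensions, so there are 2^(m-2) of them. *)

section \<open>Appending a last entry to a permutation\<close>

definition perms :: "nat \<Rightarrow> (nat \<Rightarrow> nat) set" where
  "perms n = {\<sigma>. \<sigma> permutes {1..n}}"

definition bump :: "nat \<Rightarrow> nat \<Rightarrow> nat" where
  "bump r x = (if x < r then x else Suc x)"

definition snoc_perm :: "(nat \<Rightarrow> nat) \<Rightarrow> nat \<Rightarrow> nat \<Rightarrow> nat \<Rightarrow> nat" where
  "snoc_perm \<sigma> n r i = (if i = Suc n then r else if i \<in> {1..n} then bump r (\<sigma> i) else i)"

definition butlast_perm :: "(nat \<Rightarrow> nat) \<Rightarrow> nat \<Rightarrow> nat \<Rightarrow> nat" where
  "butlast_perm \<tau> n i =
     (if i \<in> {1..n} then (if \<tau> i < \<tau> (Suc n) then \<tau> i else \<tau> i - 1) else i)"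

lemma finite_perms: "finite (perms n)"
  unfolding perms_def by (rule finite_permutations) simp

lemma perm_bounds: "\<sigma> permutes {1..n} \<Longrightarrow> 1 \<le> i \<Longrightarrow> i \<le> n \<Longrightarrow> 1 \<le> \<sigma> i \<and> \<sigma> i \<le> n"
  using permutes_in_image[of \<sigma> "{1..n}" i] by auto

lemma bump_eq_iff [simp]: "bump r x = bump r y \<longleftrightarrow> x = y"
  by (auto simp: bump_def)

lemma bump_le_iff [simp]: "bump r x \<le> bump r y \<longleftrightarrow> x \<le> y"
  by (auto simp: bump_def)

lemma bump_neq [simp]: "bump r x \<noteq> r" "r \<noteq> bump r x"
  by (simp_all add: bump_def)

lemma snoc_perm_last [simp]: "snoc_perm \<sigma> n r (Suc n) = r"
  by (simp add: snoc_perm_def)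

lemma snoc_perm_apply: "1 \<le> i \<Longrightarrow> i \<le> n \<Longrightarrow> snoc_perm \<sigma> n r i = bump r (\<sigma> i)"
  by (simp add: snoc_perm_def)

lemma snoc_perm_permutes:
  assumes \<sigma>: "\<sigma> permutes {1..n}" and r: "r \<in> {1..Suc n}"
  shows "snoc_perm \<sigma> n r permutes {1..Suc n}"
proof (rule inj_imp_permutes)
  show "inj_on (snoc_perm \<sigma> n r) {1..Suc n}"
  proof (rule inj_onI)
    fix i j assume "i \<in> {1..Suc n}" "j \<in> {1..Suc n}" "snoc_perm \<sigma> n r i = snoc_perm \<sigma> n r j"
    then show "i = j"
      using permutes_inj[OF \<sigma>] by (auto simp: snoc_perm_def inj_eq split: if_splits)
  qed
  show "snoc_perm \<sigma> n r i = i" if "i \<notin> {1..Suc n}" for i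
    using that by (auto simp: snoc_perm_def)
  show "snoc_perm \<sigma> n r i \<in> {1..Suc n}" if "i \<in> {1..Suc n}" for i
    using that r perm_bounds[OF \<sigma>, of i] by (auto simp: snoc_perm_def bump_def)
qed simp

lemma permutes_neq_last:
  assumes "\<tau> permutes {1..Suc n}" "i \<in> {1..n}"
  shows "\<tau> i \<noteq> \<tau> (Suc n)"
proof
  assume "\<tau> i = \<tau> (Suc n)"
  with permutes_inj[OF assms(1)] have "i = Suc n" by (rule injD)
  with assms(2) show False by simp
qed

lemma bump_butlast_perm:
  assumes \<tau>: "\<tau> permutes {1..Suc n}" and i: "i \<in> {1..n}"
  shows "bump (\<tau> (Suc n)) (butlast_perm \<tau> n i) = \<tau> i"
  using permutes_neq_last[OF assms] i unfolding butlast_perm_def bump_def by auto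

lemma butlast_perm_permutes:
  assumes \<tau>: "\<tau> permutes {1..Suc n}"
  shows "butlast_perm \<tau> n permutes {1..n}"
proof (rule inj_imp_permutes)
  show "inj_on (butlast_perm \<tau> n) {1..n}"
  proof (rule inj_onI)
    fix i j assume "i \<in> {1..n}" "j \<in> {1..n}" "butlast_perm \<tau> n i = butlast_perm \<tau> n j"
    then have "\<tau> i = \<tau> j"
      using bump_butlast_perm[OF \<tau>] by metis
    with permutes_inj[OF \<tau>] show "i = j" by (rule injD)
  qed
  show "butlast_perm \<tau> n i \<in> {1..n}" if i: "i \<in> {1..n}" for i
    using permutes_neq_last[OF \<tau> i] i perm_bounds[OF \<tau>, of i] perm_bounds[OF \<tau>, of "Suc n"]
    by (auto simp: butlast_perm_def)
  show "butlast_perm \<tau> n i = i" if "i \<notin> {1..n}" for i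
    unfolding butlast_perm_def by (rule if_not_P[OF that])
qed simp

lemma snoc_butlast_perm:
  assumes \<tau>: "\<tau> permutes {1..Suc n}"
  shows "snoc_perm (butlast_perm \<tau> n) n (\<tau> (Suc n)) = \<tau>"
proof
  fix i
  show "snoc_perm (butlast_perm \<tau> n) n (\<tau> (Suc n)) i = \<tau> i"
    using bump_butlast_perm[OF \<tau>, of i] permutes_not_in[OF \<tau>, of i]
    by (cases "i \<in> {1..n}") (auto simp: snoc_perm_def)
qed

lemma butlast_snoc_perm:
  assumes "\<sigma> permutes {1..n}"
  shows "butlast_perm (snoc_perm \<sigma> n r) n = \<sigma>"
  using permutes_not_in[OF assms] by (auto simp: fun_eq_iff snoc_perm_def butlast_perm_def bump_def)

lemma bij_betw_snoc_perm:
  "bij_betw (\<lambda>(\<sigma>, r). snoc_perm \<sigma> n r) (perms n \<times> {1..Suc n}) (perms (Suc n))"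
proof (rule bij_betw_byWitness[where f' = "\<lambda>\<tau>. (butlast_perm \<tau> n, \<tau> (Suc n))"])
  show "(\<lambda>\<tau>. (butlast_perm \<tau> n, \<tau> (Suc n))) ` perms (Suc n) \<subseteq> perms n \<times> {1..Suc n}"
    using butlast_perm_permutes perm_bounds by (fastforce simp: perms_def)
  show "(\<lambda>(\<sigma>, r). snoc_perm \<sigma> n r) ` (perms n \<times> {1..Suc n}) \<subseteq> perms (Suc n)"
    using snoc_perm_permutes by (auto simp: perms_def)
qed (auto simp: perms_def butlast_snoc_perm snoc_butlast_perm)

lemma card_perms_Suc_filter:
  "card {\<tau> \<in> perms (Suc n). P \<tau>} = (\<Sum>\<sigma>\<in>perms n. card {r \<in> {1..Suc n}. P (snoc_perm \<sigma> n r)})"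
proof -
  let ?f = "\<lambda>(\<sigma>, r). snoc_perm \<sigma> n r"
  let ?S = "SIGMA \<sigma>:perms n. {r \<in> {1..Suc n}. P (snoc_perm \<sigma> n r)}"
  have "?S = {x \<in> perms n \<times> {1..Suc n}. P (?f x)}"
    by auto
  then have "bij_betw ?f ?S {\<tau> \<in> perms (Suc n). P \<tau>}"
    using bij_betw_snoc_perm by (simp add: bij_betw_Collect)
  then have "card {\<tau> \<in> perms (Suc n). P \<tau>} = card ?S"
    by (simp add: bij_betw_same_card)
  also have "\<dots> = (\<Sum>\<sigma>\<in>perms n. card {r \<in> {1..Suc n}. P (snoc_perm \<sigma> n r)})"
    by (rule card_SigmaI) (simp_all add: finite_perms)
  finally show ?thesis .
qed

section \<open>Initial patterns and j-sets of extensions\<close>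

lemma init_pattern_full:
  assumes \<tau>: "\<tau> permutes {1..n}"
  shows "init_pattern \<tau> n = \<tau>"
proof
  fix i
  show "init_pattern \<tau> n i = \<tau> i"
  proof (cases "i \<in> {1..n}")
    case True
    have "\<tau> ` {l \<in> {1..n}. \<tau> l \<le> \<tau> i} = {1..\<tau> i}"
    proof
      show "\<tau> ` {l \<in> {1..n}. \<tau> l \<le> \<tau> i} \<subseteq> {1..\<tau> i}"
        using perm_bounds[OF \<tau>] by auto
      show "{1..\<tau> i} \<subseteq> \<tau> ` {l \<in> {1..n}. \<tau> l \<le> \<tau> i}"
      proof
        fix y assume y: "y \<in> {1..\<tau> i}"
        then have "y \<in> \<tau> ` {1..n}"
          using perm_bounds[OF \<tau>, of i] True permutes_image[OF \<tau>] by auto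
        with y show "y \<in> \<tau> ` {l \<in> {1..n}. \<tau> l \<le> \<tau> i}" by auto
      qed
    qed
    moreover have "inj_on \<tau> {l \<in> {1..n}. \<tau> l \<le> \<tau> i}"
      using inj_on_subset[OF permutes_inj[OF \<tau>] subset_UNIV] .
    ultimately have "card {l \<in> {1..n}. \<tau> l \<le> \<tau> i} = \<tau> i"
      by (metis card_image card_atLeastAtMost diff_Suc_1)
    then show ?thesis using True by (simp add: init_pattern_def)
  next
    case False
    then show ?thesis
      unfolding init_pattern_def if_not_P[OF False] using permutes_not_in[OF \<tau>] by simp
  qed
qed

lemma init_pattern_snoc_perm:
  assumes "j \<le> n"
  shows "init_pattern (snoc_perm \<sigma> n r) j = init_pattern \<sigma> j"
proof
  fix i
  have "{l \<in> {1..j}. snoc_perm \<sigma> n r l \<le> snoc_perm \<sigma> n r i} = {l \<in> {1..j}. \<sigma> l \<le> \<sigma> i}"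
    if "i \<in> {1..j}"
    using that assms by (auto simp: snoc_perm_apply)
  then show "init_pattern (snoc_perm \<sigma> n r) j i = init_pattern \<sigma> j i"
    by (simp add: init_pattern_def)
qed

lemma jset_subset: "jset n \<sigma> \<subseteq> {0..n}"
  by (auto simp: jset_def)

lemma last_in_jset_iff:
  assumes "\<sigma> permutes {1..n}" "1 \<le> n"
  shows "n \<in> jset n \<sigma> \<longleftrightarrow> is_involution_on \<sigma> {1..n}"
  using init_pattern_full[OF assms(1)] assms by (auto simp: jset_def)

lemma jset_snoc_perm:
  assumes \<sigma>: "\<sigma> permutes {1..n}" and r: "r \<in> {1..Suc n}"
  shows "jset (Suc n) (snoc_perm \<sigma> n r) =
    (if is_involution_on (snoc_perm \<sigma> n r) {1..Suc n} then insert (Suc n) (jset n \<sigma>) else jset n \<sigma>)"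
proof -
  have below: "j \<in> jset (Suc n) (snoc_perm \<sigma> n r) \<longleftrightarrow> j \<in> jset n \<sigma>" if "j \<le> n" for j
    using that init_pattern_snoc_perm[OF that] by (auto simp: jset_def)
  have last: "Suc n \<in> jset (Suc n) (snoc_perm \<sigma> n r) \<longleftrightarrow>
      is_involution_on (snoc_perm \<sigma> n r) {1..Suc n}"
    by (rule last_in_jset_iff[OF snoc_perm_permutes[OF \<sigma> r]]) simp
  show ?thesis
  proof (rule set_eqI)
    fix j
    consider "j \<le> n" | "j = Suc n" | "Suc n < j" by linarith
    then show "j \<in> jset (Suc n) (snoc_perm \<sigma> n r) \<longleftrightarrow> j \<in> (if is_involution_on (snoc_perm \<sigma> n r)
        {1..Suc n} then insert (Suc n) (jset n \<sigma>) else jset n \<sigma>)"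
      using below last jset_subset[of "Suc n" "snoc_perm \<sigma> n r"] jset_subset[of n \<sigma>]
      by cases auto
  qed
qed

lemma jset_snoc_perm_eq_iff:
  assumes "\<sigma> permutes {1..n}" "r \<in> {1..Suc n}"
  shows "jset (Suc n) (snoc_perm \<sigma> n r) = E \<longleftrightarrow>
    jset n \<sigma> = E - {Suc n} \<and> (Suc n \<in> E \<longleftrightarrow> is_involution_on (snoc_perm \<sigma> n r) {1..Suc n})"
  using jset_snoc_perm[OF assms] jset_subset[of n \<sigma>] by auto

definition jset_perms :: "nat \<Rightarrow> nat set \<Rightarrow> (nat \<Rightarrow> nat) set" where
  "jset_perms n E = {\<tau> \<in> perms n. jset n \<tau> = E}"

lemma card_jset_perms_Suc_filter:
  "card {\<tau> \<in> jset_perms (Suc n) E. Q \<tau>} =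
    (\<Sum>\<sigma>\<in>jset_perms n (E - {Suc n}). card {r \<in> {1..Suc n}.
       (Suc n \<in> E \<longleftrightarrow> is_involution_on (snoc_perm \<sigma> n r) {1..Suc n}) \<and> Q (snoc_perm \<sigma> n r)})"
    (is "_ = (\<Sum>\<sigma>\<in>_. ?c \<sigma>)")
proof -
  have "card {\<tau> \<in> jset_perms (Suc n) E. Q \<tau>} =
      (\<Sum>\<sigma>\<in>perms n. card {r \<in> {1..Suc n}. jset (Suc n) (snoc_perm \<sigma> n r) = E \<and> Q (snoc_perm \<sigma> n r)})"
    using card_perms_Suc_filter[of n "\<lambda>\<tau>. jset (Suc n) \<tau> = E \<and> Q \<tau>"]
    by (simp add: jset_perms_def conj_assoc)
  also have "\<dots> = (\<Sum>\<sigma>\<in>perms n. if jset n \<sigma> = E - {Suc n} then ?c \<sigma> else 0)"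
  proof (rule sum.cong[OF refl])
    fix \<sigma> assume "\<sigma> \<in> perms n"
    then have \<sigma>: "\<sigma> permutes {1..n}" by (simp add: perms_def)
    note eq = jset_snoc_perm_eq_iff[OF \<sigma>, of _ E]
    show "card {r \<in> {1..Suc n}. jset (Suc n) (snoc_perm \<sigma> n r) = E \<and> Q (snoc_perm \<sigma> n r)} =
      (if jset n \<sigma> = E - {Suc n} then ?c \<sigma> else 0)"
    proof (cases "jset n \<sigma> = E - {Suc n}")
      case True
      show ?thesis
        unfolding if_P[OF True] by (intro arg_cong[where f = card] Collect_cong) (use eq True in blast)
    next
      case False
      then have "{r \<in> {1..Suc n}. jset (Suc n) (snoc_perm \<sigma> n r) = E \<and> Q (snoc_perm \<sigma> n r)} = {}"
        using eq by blast
      then show ?thesis using False by simp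
    qed
  qed
  also have "\<dots> = (\<Sum>\<sigma>\<in>jset_perms n (E - {Suc n}). ?c \<sigma>)"
    unfolding jset_perms_def by (rule sum.inter_filter[OF finite_perms, symmetric])
  finally show ?thesis .
qed

section \<open>Involutive extensions of involutions\<close>

definition tail_reversed :: "(nat \<Rightarrow> nat) \<Rightarrow> nat \<Rightarrow> bool" where
  "tail_reversed \<sigma> n \<longleftrightarrow> (\<forall>i \<in> {\<sigma> n..n}. \<sigma> i = \<sigma> n + n - i)"

lemma tail_reversedD: "tail_reversed \<sigma> n \<Longrightarrow> \<sigma> n \<le> i \<Longrightarrow> i \<le> n \<Longrightarrow> \<sigma> i = \<sigma> n + n - i"
  by (metis atLeastAtMost_iff tail_reversed_def)

lemma involution_onD: "is_involution_on \<sigma> A \<Longrightarrow> i \<in> A \<Longrightarrow> \<sigma> (\<sigma> i) = i"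
  by (simp add: is_involution_on_def)

lemma involution_maps_below:
  assumes \<sigma>: "\<sigma> permutes {1..n}" "is_involution_on \<sigma> {1..n}"
    and up: "\<And>j. j \<in> {a..n} \<Longrightarrow> a \<le> \<sigma> j" and i: "1 \<le> i" "i < a" and a: "a \<le> Suc n"
  shows "\<sigma> i < a"
proof (rule ccontr)
  assume "\<not> \<sigma> i < a"
  then have "\<sigma> i \<in> {a..n}" using perm_bounds[OF \<sigma>(1), of i] i a by auto
  then have "a \<le> \<sigma> (\<sigma> i)" by (rule up)
  moreover have "\<sigma> (\<sigma> i) = i" using involution_onD[OF \<sigma>(2)] i a by auto
  ultimately show False using i by simp
qed

lemma tail_reversed_maps_below:
  assumes \<sigma>: "\<sigma> permutes {1..n}" "is_involution_on \<sigma> {1..n}" and "tail_reversed \<sigma> n"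
    and "1 \<le> n" "1 \<le> i" "i < \<sigma> n"
  shows "\<sigma> i < \<sigma> n"
proof (rule involution_maps_below[OF \<sigma>])
  show "\<sigma> n \<le> \<sigma> j" if "j \<in> {\<sigma> n..n}" for j
    using that tail_reversedD[OF \<open>tail_reversed \<sigma> n\<close>, of j] by auto
  show "\<sigma> n \<le> Suc n"
    using perm_bounds[OF \<sigma>(1), of n] \<open>1 \<le> n\<close> by simp
qed (use assms in simp_all)

lemma involution_on_glue:
  assumes \<sigma>: "\<sigma> permutes {1..n}" "is_involution_on \<sigma> {1..n}" and a: "a \<le> Suc n"
    and low: "\<And>i. 1 \<le> i \<Longrightarrow> i < a \<Longrightarrow> \<sigma> i < a \<and> \<pi> i = \<sigma> i"
    and high: "\<And>i. i \<in> {a..N} \<Longrightarrow> \<pi> i \<in> {a..N} \<and> \<pi> (\<pi> i) = i"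
  shows "is_involution_on \<pi> {1..N}"
  unfolding is_involution_on_def
proof
  fix i assume i: "i \<in> {1..N}"
  show "\<pi> (\<pi> i) = i"
  proof (cases "i < a")
    case True
    with i have "1 \<le> i" by simp
    with True low have \<pi>i: "\<pi> i = \<sigma> i" and below: "\<sigma> i < a" by auto
    have "i \<le> n" using True a by simp
    with \<open>1 \<le> i\<close> have "1 \<le> \<sigma> i" using perm_bounds[OF \<sigma>(1)] by blast
    with below low have "\<pi> (\<sigma> i) = \<sigma> (\<sigma> i)" by blast
    also have "\<dots> = i" using involution_onD[OF \<sigma>(2)] \<open>1 \<le> i\<close> \<open>i \<le> n\<close> by simp
    finally show ?thesis using \<pi>i by simp
  next
    case False
    with i high show ?thesis by simp
  qed
qed

lemma snoc_perm_top: "\<sigma> permutes {1..n} \<Longrightarrow> i \<in> {1..n} \<Longrightarrow> snoc_perm \<sigma> n (Suc n) i = \<sigma> i"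
  using perm_bounds[of \<sigma> n i] by (auto simp: snoc_perm_apply bump_def)

lemma involution_snoc_perm_top_iff:
  assumes \<sigma>: "\<sigma> permutes {1..n}"
  shows "is_involution_on (snoc_perm \<sigma> n (Suc n)) {1..Suc n} \<longleftrightarrow> is_involution_on \<sigma> {1..n}"
proof -
  have eq: "snoc_perm \<sigma> n (Suc n) (snoc_perm \<sigma> n (Suc n) i) = \<sigma> (\<sigma> i)" if "i \<in> {1..n}" for i
    using that snoc_perm_top[OF \<sigma>] permutes_in_image[OF \<sigma>] by simp
  have "is_involution_on (snoc_perm \<sigma> n (Suc n)) {1..Suc n} \<longleftrightarrow>
      (\<forall>i\<in>{1..n}. snoc_perm \<sigma> n (Suc n) (snoc_perm \<sigma> n (Suc n) i) = i)"
    by (simp add: is_involution_on_def atLeastAtMostSuc_conv)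
  also have "\<dots> \<longleftrightarrow> is_involution_on \<sigma> {1..n}"
    using eq by (auto simp: is_involution_on_def)
  finally show ?thesis .
qed

lemma snoc_perm_tail_reversal:
  assumes \<sigma>: "\<sigma> permutes {1..n}" and rev: "tail_reversed \<sigma> n" and n: "1 \<le> n"
    and i: "i \<in> {\<sigma> n..Suc n}"
  shows "snoc_perm \<sigma> n (\<sigma> n) i = \<sigma> n + Suc n - i"
proof (cases "i = Suc n")
  case False
  then have "1 \<le> i" "i \<le> n"
    using i perm_bounds[OF \<sigma>, of n] n by auto
  moreover have "\<sigma> i = \<sigma> n + n - i"
    using tail_reversedD[OF rev, of i] i \<open>i \<le> n\<close> by simp
  ultimately show ?thesis by (auto simp: snoc_perm_apply bump_def)
qed simp

lemma tail_reversed_snoc_perm: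
  assumes \<sigma>: "\<sigma> permutes {1..n}" and n: "1 \<le> n"
    and r: "r = Suc n \<or> (r = \<sigma> n \<and> tail_reversed \<sigma> n)"
  shows "tail_reversed (snoc_perm \<sigma> n r) (Suc n)"
  unfolding tail_reversed_def
proof
  fix i assume i: "i \<in> {snoc_perm \<sigma> n r (Suc n)..Suc n}"
  from r show "snoc_perm \<sigma> n r i = snoc_perm \<sigma> n r (Suc n) + Suc n - i"
  proof
    assume "r = Suc n"
    then show ?thesis using i by simp
  next
    assume "r = \<sigma> n \<and> tail_reversed \<sigma> n"
    then show ?thesis using snoc_perm_tail_reversal[OF \<sigma> _ n, of i] i by simp
  qed
qed

lemma involution_snoc_perm_tail:
  assumes \<sigma>: "\<sigma> permutes {1..n}" "is_involution_on \<sigma> {1..n}" and rev: "tail_reversed \<sigma> n"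
    and n: "1 \<le> n"
  shows "is_involution_on (snoc_perm \<sigma> n (\<sigma> n)) {1..Suc n}"
proof (rule involution_on_glue[OF \<sigma>])
  have t: "1 \<le> \<sigma> n" "\<sigma> n \<le> n" using perm_bounds[OF \<sigma>(1), of n] n by auto
  then show "\<sigma> n \<le> Suc n" by simp
  show "\<sigma> i < \<sigma> n \<and> snoc_perm \<sigma> n (\<sigma> n) i = \<sigma> i" if "1 \<le> i" "i < \<sigma> n" for i
    using tail_reversed_maps_below[OF \<sigma> rev n that] that t by (simp add: snoc_perm_apply bump_def)
  show "snoc_perm \<sigma> n (\<sigma> n) i \<in> {\<sigma> n..Suc n} \<and>
      snoc_perm \<sigma> n (\<sigma> n) (snoc_perm \<sigma> n (\<sigma> n) i) = i" if i: "i \<in> {\<sigma> n..Suc n}" for i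
  proof -
    have j: "\<sigma> n + Suc n - i \<in> {\<sigma> n..Suc n}" using i by auto
    show ?thesis
      using snoc_perm_tail_reversal[OF \<sigma>(1) rev n i] snoc_perm_tail_reversal[OF \<sigma>(1) rev n j] i j
      by auto
  qed
qed

lemma involution_snoc_perm_last:
  assumes \<sigma>: "\<sigma> permutes {1..n}" "is_involution_on \<sigma> {1..n}" and r: "1 \<le> r" "r \<le> n"
    and inv: "is_involution_on (snoc_perm \<sigma> n r) {1..Suc n}"
  shows "\<sigma> n = r"
proof -
  have "bump r (\<sigma> r) = Suc n"
    using involution_onD[OF inv, of "Suc n"] r by (simp add: snoc_perm_apply)
  then have "\<sigma> r = n"
    using perm_bounds[OF \<sigma>(1) r] by (auto simp: bump_def split: if_splits)
  then show ?thesis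
    using involution_onD[OF \<sigma>(2), of r] r by simp
qed

text \<open>Walking down from \<open>n\<close>: \<open>snoc_perm \<sigma> n r\<close> swaps \<open>n - d\<close> with \<open>r + d + 1\<close>, which forces
  \<open>\<sigma>\<close> to swap \<open>n - d - 1\<close> with \<open>r + d + 1\<close>.\<close>

lemma involution_snoc_perm_walk:
  assumes \<sigma>: "\<sigma> permutes {1..n}" "is_involution_on \<sigma> {1..n}" and r: "1 \<le> r" "r \<le> n"
    and inv: "is_involution_on (snoc_perm \<sigma> n r) {1..Suc n}" and d: "d \<le> n - r"
  shows "\<sigma> (n - d) = r + d"
  using d
proof (induction d)
  case 0
  show ?case using involution_snoc_perm_last[OF assms(1-5)] by simp
next
  case (Suc d)
  let ?\<tau> = "snoc_perm \<sigma> n r"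
  from Suc have ih: "\<sigma> (n - d) = r + d" and b: "r + d + 1 \<le> n" "r + 1 \<le> n - d" by auto
  have "?\<tau> (n - d) = r + d + 1"
    using ih b r by (simp add: snoc_perm_apply bump_def)
  then have "?\<tau> (r + d + 1) = n - d"
    using involution_onD[OF inv, of "n - d"] b r by simp
  then have "bump r (\<sigma> (r + d + 1)) = n - d"
    using b r by (simp add: snoc_perm_apply)
  then have "\<sigma> (r + d + 1) = n - Suc d"
    using b by (auto simp: bump_def split: if_splits)
  then show ?case
    using involution_onD[OF \<sigma>(2), of "r + d + 1"] b r by simp
qed

lemma involution_snoc_perm_imp_tail_reversed:
  assumes \<sigma>: "\<sigma> permutes {1..n}" "is_involution_on \<sigma> {1..n}" and r: "1 \<le> r" "r \<le> n"
    and inv: "is_involution_on (snoc_perm \<sigma> n r) {1..Suc n}"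
  shows "r = \<sigma> n \<and> tail_reversed \<sigma> n"
proof -
  have rn: "\<sigma> n = r" by (rule involution_snoc_perm_last[OF assms])
  have "tail_reversed \<sigma> n"
    unfolding tail_reversed_def
  proof
    fix i assume i: "i \<in> {\<sigma> n..n}"
    then have "n - i \<le> n - r" using rn by auto
    then show "\<sigma> i = \<sigma> n + n - i"
      using involution_snoc_perm_walk[OF assms, of "n - i"] rn i by auto
  qed
  with rn show ?thesis by simp
qed

lemma involution_snoc_perm_iff:
  assumes \<sigma>: "\<sigma> permutes {1..n}" "is_involution_on \<sigma> {1..n}" and n: "1 \<le> n"
    and r: "r \<in> {1..Suc n}"
  shows "is_involution_on (snoc_perm \<sigma> n r) {1..Suc n} \<longleftrightarrow>
    r = Suc n \<or> (r = \<sigma> n \<and> tail_reversed \<sigma> n)"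
proof
  assume inv: "is_involution_on (snoc_perm \<sigma> n r) {1..Suc n}"
  show "r = Suc n \<or> (r = \<sigma> n \<and> tail_reversed \<sigma> n)"
  proof (cases "r = Suc n")
    case False
    with r have "1 \<le> r" "r \<le> n" by auto
    with involution_snoc_perm_imp_tail_reversed[OF \<sigma> _ _ inv] show ?thesis by blast
  qed simp
next
  assume "r = Suc n \<or> (r = \<sigma> n \<and> tail_reversed \<sigma> n)"
  then show "is_involution_on (snoc_perm \<sigma> n r) {1..Suc n}"
    using involution_snoc_perm_top_iff[OF \<sigma>(1)] involution_snoc_perm_tail[OF \<sigma> _ n] \<sigma>(2) by blast
qed

lemma card_involution_snoc_perms:
  assumes \<sigma>: "\<sigma> permutes {1..n}" "is_involution_on \<sigma> {1..n}" and n: "1 \<le> n"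
  shows "card {r \<in> {1..Suc n}. is_involution_on (snoc_perm \<sigma> n r) {1..Suc n}} =
    (if tail_reversed \<sigma> n then 2 else 1)"
proof -
  have t: "1 \<le> \<sigma> n" "\<sigma> n \<le> n" using perm_bounds[OF \<sigma>(1), of n] n by auto
  have "{r \<in> {1..Suc n}. is_involution_on (snoc_perm \<sigma> n r) {1..Suc n}} =
      (if tail_reversed \<sigma> n then {\<sigma> n, Suc n} else {Suc n})"
    using involution_snoc_perm_iff[OF \<sigma> n] t by auto
  then show ?thesis using t by simp
qed

lemma butlast_perm_involution:
  assumes \<tau>: "\<tau> permutes {1..Suc n}" "is_involution_on \<tau> {1..Suc n}"
    and rev: "tail_reversed \<tau> (Suc n)"
  shows "is_involution_on (butlast_perm \<tau> n) {1..n}"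
proof (rule involution_on_glue[OF \<tau>])
  let ?t = "\<tau> (Suc n)"
  have t: "1 \<le> ?t" "?t \<le> Suc n" using perm_bounds[OF \<tau>(1), of "Suc n"] by auto
  then show "?t \<le> Suc (Suc n)" by simp
  show "\<tau> i < ?t \<and> butlast_perm \<tau> n i = \<tau> i" if "1 \<le> i" "i < ?t" for i
    using tail_reversed_maps_below[OF \<tau> rev _ that] that t by (simp add: butlast_perm_def)
  have top: "butlast_perm \<tau> n i = ?t + n - i" if "i \<in> {?t..n}" for i
    using that t tail_reversedD[OF rev, of i] by (auto simp: butlast_perm_def)
  show "butlast_perm \<tau> n i \<in> {?t..n} \<and> butlast_perm \<tau> n (butlast_perm \<tau> n i) = i"
    if i: "i \<in> {?t..n}" for i
  proof -
    have j: "?t + n - i \<in> {?t..n}" using i by auto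
    show ?thesis using top[OF i] top[OF j] i j by auto
  qed
qed

lemma tail_reversed_iff_jset:
  assumes \<tau>: "\<tau> permutes {1..Suc n}" "is_involution_on \<tau> {1..Suc n}"
  shows "tail_reversed \<tau> (Suc n) \<longleftrightarrow> n \<in> jset (Suc n) \<tau>"
proof (cases "n = 0")
  case True
  then have "\<tau> 1 = 1" using perm_bounds[OF \<tau>(1), of 1] by simp
  with True show ?thesis by (simp add: tail_reversed_def jset_def)
next
  case False
  then have n: "1 \<le> n" by simp
  let ?\<sigma> = "butlast_perm \<tau> n"
  have \<sigma>: "?\<sigma> permutes {1..n}" by (rule butlast_perm_permutes[OF \<tau>(1)])
  have \<tau>_eq: "snoc_perm ?\<sigma> n (\<tau> (Suc n)) = \<tau>" by (rule snoc_butlast_perm[OF \<tau>(1)])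
  have last: "\<tau> (Suc n) \<in> {1..Suc n}" using perm_bounds[OF \<tau>(1), of "Suc n"] by simp
  have "n \<in> jset (Suc n) \<tau> \<longleftrightarrow> n \<in> jset n ?\<sigma>"
    using jset_snoc_perm[OF \<sigma> last] \<tau>_eq by auto
  also have "\<dots> \<longleftrightarrow> is_involution_on ?\<sigma> {1..n}" by (rule last_in_jset_iff[OF \<sigma> n])
  also have "\<dots> \<longleftrightarrow> tail_reversed \<tau> (Suc n)"
  proof
    assume "is_involution_on ?\<sigma> {1..n}"
    then have "\<tau> (Suc n) = Suc n \<or> (\<tau> (Suc n) = ?\<sigma> n \<and> tail_reversed ?\<sigma> n)"
      using involution_snoc_perm_iff[OF \<sigma> _ n last] \<tau>_eq \<tau>(2) by simp
    then show "tail_reversed \<tau> (Suc n)"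
      using tail_reversed_snoc_perm[OF \<sigma> n] \<tau>_eq by metis
  next
    assume "tail_reversed \<tau> (Suc n)"
    then show "is_involution_on ?\<sigma> {1..n}" by (rule butlast_perm_involution[OF \<tau>])
  qed
  finally show ?thesis by blast
qed

section \<open>Counting permutations by j-set\<close>

lemma card_jset_perms_Suc:
  assumes E: "Suc n \<in> E" "n \<in> E" and n: "1 \<le> n"
  shows "card (jset_perms (Suc n) E) = (if n - 1 \<in> E then 2 else 1) * card (jset_perms n (E - {Suc n}))"
proof -
  have "card (jset_perms (Suc n) E) = (\<Sum>\<sigma>\<in>jset_perms n (E - {Suc n}).
      card {r \<in> {1..Suc n}. is_involution_on (snoc_perm \<sigma> n r) {1..Suc n}})"
    using card_jset_perms_Suc_filter[of n E "\<lambda>_. True"] E by simp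
  also have "\<dots> = (\<Sum>\<sigma>\<in>jset_perms n (E - {Suc n}). if n - 1 \<in> E then 2 else 1)"
  proof (rule sum.cong[OF refl])
    fix \<sigma> assume "\<sigma> \<in> jset_perms n (E - {Suc n})"
    then have \<sigma>: "\<sigma> permutes {1..n}" and J: "jset n \<sigma> = E - {Suc n}"
      by (auto simp: jset_perms_def perms_def)
    have inv: "is_involution_on \<sigma> {1..n}"
      using last_in_jset_iff[OF \<sigma> n] J E by simp
    obtain m where m: "n = Suc m" using n by (cases n) auto
    have "tail_reversed \<sigma> n \<longleftrightarrow> n - 1 \<in> jset n \<sigma>"
      using tail_reversed_iff_jset[of \<sigma> m] \<sigma> inv unfolding m by simp
    also have "\<dots> \<longleftrightarrow> n - 1 \<in> E"
      using J by (metis Diff_iff Suc_n_not_le_n diff_le_self singletonD)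
    finally show "card {r \<in> {1..Suc n}. is_involution_on (snoc_perm \<sigma> n r) {1..Suc n}} =
        (if n - 1 \<in> E then 2 else 1)"
      using card_involution_snoc_perms[OF \<sigma> inv n] by simp
  qed
  also have "\<dots> = (if n - 1 \<in> E then 2 else 1) * card (jset_perms n (E - {Suc n}))"
    by simp
  finally show ?thesis .
qed

lemma card_jset_perms_full:
  assumes "1 \<le> n"
  shows "card (jset_perms n {0..n}) = 2 ^ (n - 1)"
  using assms
proof (induction n rule: nat_induct_at_least)
  case base
  have "is_involution_on id {1..1}" by (simp add: is_involution_on_def)
  then have "1 \<in> jset 1 id" using last_in_jset_iff[of id 1] by (simp add: permutes_id)
  moreover have "0 \<in> jset 1 id" by (simp add: jset_def)
  ultimately have "jset 1 id = {0..1}" using jset_subset[of 1 id] by (auto simp: le_Suc_eq)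
  moreover have "perms 1 = {id}" by (simp add: perms_def permutes_sing)
  ultimately have "jset_perms 1 {0..1} = {id}" by (auto simp: jset_perms_def)
  then show ?case by simp
next
  case (Suc n)
  have "{0..Suc n} - {Suc n} = {0..n}" by auto
  moreover have "2 ^ (Suc n - 1) = 2 * (2::nat) ^ (n - 1)" using Suc.hyps by (cases n) auto
  ultimately show ?case
    using card_jset_perms_Suc[of n "{0..Suc n}"] Suc by simp
qed

lemma jset_perms_fullD:
  assumes \<sigma>: "\<sigma> \<in> jset_perms n {0..n}" and n: "1 \<le> n"
  shows "\<sigma> permutes {1..n}" "is_involution_on \<sigma> {1..n}" "tail_reversed \<sigma> n"
proof -
  show p: "\<sigma> permutes {1..n}" using \<sigma> by (simp add: jset_perms_def perms_def)
  show inv: "is_involution_on \<sigma> {1..n}"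
    using last_in_jset_iff[OF p n] \<sigma> by (simp add: jset_perms_def)
  show "tail_reversed \<sigma> n"
    using tail_reversed_iff_jset[of \<sigma> "n - 1"] p inv n \<sigma> by (simp add: jset_perms_def)
qed

lemma jset_perms_full_fixed_last:
  assumes \<sigma>: "\<sigma> \<in> jset_perms (Suc m) {0..Suc m}" and m: "1 \<le> m" and last: "\<sigma> (Suc m) = Suc m"
  shows "tail_reversed \<sigma> m"
proof -
  have p: "\<sigma> permutes {1..Suc m}" using \<sigma> by (simp add: jset_perms_def perms_def)
  let ?\<sigma> = "butlast_perm \<sigma> m"
  have p': "?\<sigma> permutes {1..m}" by (rule butlast_perm_permutes[OF p])
  have eq: "snoc_perm ?\<sigma> m (Suc m) = \<sigma>"
    using snoc_butlast_perm[OF p] last by simp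
  have "jset (Suc m) (snoc_perm ?\<sigma> m (Suc m)) = {0..Suc m}"
    using eq \<sigma> by (simp add: jset_perms_def)
  then have "jset m ?\<sigma> = {0..Suc m} - {Suc m}"
    using jset_snoc_perm_eq_iff[OF p', of "Suc m" "{0..Suc m}"] by simp
  also have "\<dots> = {0..m}" by auto
  finally have "jset m ?\<sigma> = {0..m}" .
  then have rev: "tail_reversed ?\<sigma> m"
    using jset_perms_fullD(3)[of ?\<sigma> m] p' m by (simp add: jset_perms_def perms_def)
  have agree: "\<sigma> i = ?\<sigma> i" if "i \<in> {1..m}" for i
    using snoc_perm_top[OF p' that] eq by simp
  have top: "\<sigma> m = ?\<sigma> m" "1 \<le> ?\<sigma> m" using agree[of m] perm_bounds[OF p', of m] m by auto
  show ?thesis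
    unfolding tail_reversed_def
  proof
    fix i assume i: "i \<in> {\<sigma> m..m}"
    then have "\<sigma> i = ?\<sigma> i" using agree top by simp
    also have "\<dots> = ?\<sigma> m + m - i" using tail_reversedD[OF rev, of i] i top by simp
    finally show "\<sigma> i = \<sigma> m + m - i" using top by simp
  qed
qed

section \<open>The j-set with a gap just below the top\<close>

lemma involution_snoc_perm_of_noninvolution:
  assumes \<rho>: "\<rho> permutes {1..N}" and ninv: "\<not> is_involution_on \<rho> {1..N}"
    and s: "s \<in> {1..Suc N}" and inv: "is_involution_on (snoc_perm \<rho> N s) {1..Suc N}"
  shows "s \<le> N \<and> \<rho> s = N"
proof -
  have "s \<noteq> Suc N" using involution_snoc_perm_top_iff[OF \<rho>] ninv inv by auto
  with s have sN: "1 \<le> s" "s \<le> N" by auto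
  have "snoc_perm \<rho> N s s = Suc N" using involution_onD[OF inv, of "Suc N"] by simp
  then have "bump s (\<rho> s) = Suc N" using sN by (simp add: snoc_perm_apply)
  then show ?thesis using perm_bounds[OF \<rho> sN] sN by (auto simp: bump_def split: if_splits)
qed

lemma card_involution_snoc_perms_of_noninvolution:
  assumes \<rho>: "\<rho> permutes {1..N}" and ninv: "\<not> is_involution_on \<rho> {1..N}"
  shows "card {s \<in> {1..Suc N}. is_involution_on (snoc_perm \<rho> N s) {1..Suc N}} =
    (if \<exists>s \<in> {1..Suc N}. is_involution_on (snoc_perm \<rho> N s) {1..Suc N} then 1 else 0)"
    (is "card ?S = _")
proof -
  have "s = s'" if "s \<in> ?S" "s' \<in> ?S" for s s'
    using involution_snoc_perm_of_noninvolution[OF \<rho> ninv] that permutes_inj[OF \<rho>]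
    by (metis (no_types, lifting) injD mem_Collect_eq)
  then have "card ?S \<le> 1" by (simp add: card_le_Suc0_iff_eq)
  moreover have "?S \<noteq> {} \<longleftrightarrow> (\<exists>s \<in> {1..Suc N}. is_involution_on (snoc_perm \<rho> N s) {1..Suc N})"
    by blast
  ultimately show ?thesis
    using card_gt_0_iff[of ?S] by (auto simp del: atLeastAtMost_iff)
qed

lemma snoc_snoc_perm_apply:
  "1 \<le> i \<Longrightarrow> i \<le> n \<Longrightarrow> snoc_perm (snoc_perm \<sigma> n r) (Suc n) s i = bump s (bump r (\<sigma> i))"
  by (simp add: snoc_perm_apply)

lemma involution_snoc_snoc_perm_last_entry:
  assumes \<sigma>: "\<sigma> permutes {1..n}" "is_involution_on \<sigma> {1..n}"
    and r: "r \<in> {1..Suc n}" and s: "s \<in> {1..Suc (Suc n)}"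
    and ninv: "\<not> is_involution_on (snoc_perm \<sigma> n r) {1..Suc n}"
    and inv: "is_involution_on (snoc_perm (snoc_perm \<sigma> n r) (Suc n) s) {1..Suc (Suc n)}"
  shows "s = \<sigma> n \<and> r \<le> n"
proof -
  let ?\<rho> = "snoc_perm \<sigma> n r"
  have \<rho>: "?\<rho> permutes {1..Suc n}" by (rule snoc_perm_permutes[OF \<sigma>(1) r])
  have s\<rho>: "s \<le> Suc n" "?\<rho> s = Suc n"
    using involution_snoc_perm_of_noninvolution[OF \<rho> ninv s inv] by auto
  have "s \<noteq> Suc n"
  proof
    assume "s = Suc n"
    then have "r = Suc n" using s\<rho> by simp
    then show False using ninv involution_snoc_perm_top_iff[OF \<sigma>(1)] \<sigma>(2) by simp
  qed
  with s s\<rho> have s1: "1 \<le> s" "s \<le> n" by auto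
  then have "bump r (\<sigma> s) = Suc n" using s\<rho> by (simp add: snoc_perm_apply)
  then have "\<sigma> s = n" "r \<le> n"
    using perm_bounds[OF \<sigma>(1) s1] by (auto simp: bump_def split: if_splits)
  moreover have "\<sigma> (\<sigma> s) = s" using involution_onD[OF \<sigma>(2)] s1 by simp
  ultimately show ?thesis by simp
qed

lemma involution_snoc_snoc_perm_first_entry:
  assumes \<sigma>: "\<sigma> permutes {1..n}" "is_involution_on \<sigma> {1..n}" "tail_reversed \<sigma> n" and n: "2 \<le> n"
    and r: "1 \<le> r" "r \<le> n" "r \<noteq> \<sigma> n"
    and inv: "is_involution_on (snoc_perm (snoc_perm \<sigma> n r) (Suc n) (\<sigma> n)) {1..Suc (Suc n)}"
  shows "r = (if \<sigma> n < n then n else \<sigma> (n - 1))"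
proof -
  let ?t = "\<sigma> n"
  let ?\<pi> = "snoc_perm (snoc_perm \<sigma> n r) (Suc n) ?t"
  have t: "1 \<le> ?t" "?t \<le> n" using perm_bounds[OF \<sigma>(1), of n] n by auto
  have partner: "?\<pi> (bump ?t r) = Suc n"
    using involution_onD[OF inv, of "Suc n"] by (simp add: snoc_perm_apply)
  have to_pred: "\<sigma> u = n - 1" if "1 \<le> u" "u \<le> n" "?\<pi> u = Suc n" "r < n" for u
    using that perm_bounds[OF \<sigma>(1), of u] t
    by (auto simp: snoc_snoc_perm_apply bump_def split: if_splits)
  show ?thesis
  proof (cases "?t < n")
    case True
    show ?thesis
    proof (rule ccontr)
      assume "r \<noteq> (if ?t < n then n else \<sigma> (n - 1))"
      with True r have "r < n" by simp
      then have "bump ?t r \<le> n" "1 \<le> bump ?t r" using r by (auto simp: bump_def)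
      then have "\<sigma> (bump ?t r) = n - 1" using to_pred partner \<open>r < n\<close> by blast
      moreover have "\<sigma> (Suc ?t) = n - 1"
        using tail_reversedD[OF \<sigma>(3), of "Suc ?t"] True by simp
      ultimately have "bump ?t r = Suc ?t"
        using permutes_inj[OF \<sigma>(1)] by (metis injD)
      then have "r = ?t" by (auto simp: bump_def split: if_splits)
      with r show False by simp
    qed
  next
    case False
    with t have tn: "?t = n" by simp
    with r have "r < n" by simp
    then have "bump ?t r = r" using tn by (simp add: bump_def)
    then have "\<sigma> r = n - 1" using to_pred[of r] partner r \<open>r < n\<close> by simp
    then have "r = \<sigma> (n - 1)" using involution_onD[OF \<sigma>(2), of r] r by simp
    with False show ?thesis by simp
  qed
qed

lemma involution_snoc_snoc_perm_lt:
  assumes \<sigma>: "\<sigma> permutes {1..n}" "is_involution_on \<sigma> {1..n}" "tail_reversed \<sigma> n"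
    and lt: "\<sigma> n < n"
  shows "is_involution_on (snoc_perm (snoc_perm \<sigma> n n) (Suc n) (\<sigma> n)) {1..Suc (Suc n)}"
proof -
  let ?t = "\<sigma> n"
  let ?\<pi> = "snoc_perm (snoc_perm \<sigma> n n) (Suc n) ?t"
  have n: "1 \<le> n" using lt by simp
  have t: "1 \<le> ?t" using perm_bounds[OF \<sigma>(1), of n] n by simp
  have \<sigma>t: "\<sigma> ?t = n" using involution_onD[OF \<sigma>(2), of n] n by simp
  have val: "?\<pi> i = (if i = ?t then Suc (Suc n) else if i = Suc (Suc n) then ?t
      else if i = Suc n then Suc n else ?t + Suc n - i)" if i: "i \<in> {?t..Suc (Suc n)}" for i
  proof -
    consider "i = ?t" | "?t < i" "i \<le> n" | "i = Suc n" | "i = Suc (Suc n)"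
      using i by fastforce
    then show ?thesis
    proof cases
      case 2
      then have "\<sigma> i = ?t + n - i" using tail_reversedD[OF \<sigma>(3), of i] by simp
      with 2 t show ?thesis by (auto simp: snoc_snoc_perm_apply bump_def)
    qed (use \<sigma>t t lt in \<open>simp_all add: snoc_snoc_perm_apply snoc_perm_apply bump_def\<close>)
  qed
  show ?thesis
  proof (rule involution_on_glue[OF \<sigma>(1,2)])
    show "?t \<le> Suc n" using lt by simp
    show "\<sigma> i < ?t \<and> ?\<pi> i = \<sigma> i" if "1 \<le> i" "i < ?t" for i
      using tail_reversed_maps_below[OF \<sigma> n that] that lt
      by (simp add: snoc_snoc_perm_apply bump_def)
    show "?\<pi> i \<in> {?t..Suc (Suc n)} \<and> ?\<pi> (?\<pi> i) = i" if i: "i \<in> {?t..Suc (Suc n)}" for i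
    proof -
      have "?\<pi> i \<in> {?t..Suc (Suc n)}" using val[OF i] i lt by auto
      then show ?thesis using val[OF i] val[of "?\<pi> i"] i lt by auto
    qed
  qed
qed

lemma involution_fixed_last_prev:
  assumes \<sigma>: "\<sigma> permutes {1..n}" "is_involution_on \<sigma> {1..n}" and fixed: "\<sigma> n = n" and n: "2 \<le> n"
  shows "1 \<le> \<sigma> (n - 1)" "\<sigma> (n - 1) < n" "\<sigma> (\<sigma> (n - 1)) = n - 1"
proof -
  have "\<sigma> (n - 1) \<noteq> \<sigma> n"
  proof
    assume "\<sigma> (n - 1) = \<sigma> n"
    with permutes_inj[OF \<sigma>(1)] have "n - 1 = n" by (rule injD)
    with n show False by simp
  qed
  moreover have "1 \<le> n - 1" "n - 1 \<le> n" using n by auto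
  ultimately show "1 \<le> \<sigma> (n - 1)" "\<sigma> (n - 1) < n"
    using perm_bounds[OF \<sigma>(1)] fixed by fastforce+
  show "\<sigma> (\<sigma> (n - 1)) = n - 1"
    using involution_onD[OF \<sigma>(2), of "n - 1"] n by simp
qed

lemma snoc_snoc_perm_fixed_apply:
  assumes fixed: "\<sigma> n = n" and w: "\<sigma> (n - 1) = w" "1 \<le> w" "w < n" "\<sigma> w = n - 1"
    and rev: "tail_reversed \<sigma> (n - 1)" and i: "i \<in> {w..Suc (Suc n)}"
  shows "snoc_perm (snoc_perm \<sigma> n w) (Suc n) n i =
    (if i = w then Suc n else if i = Suc n then w else if i = n then Suc (Suc n)
     else if i = Suc (Suc n) then n else w + n - i)"
proof -
  consider "i = w" | "w < i" "i < n" | "i = n" | "i = Suc n" | "i = Suc (Suc n)"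
    using i by fastforce
  then show ?thesis
  proof cases
    case 1
    with w show ?thesis by (simp add: snoc_snoc_perm_apply bump_def)
  next
    case 2
    then have "\<sigma> i = w + (n - 1) - i" using tail_reversedD[OF rev, of i] w(1) by simp
    moreover have "w \<le> w + (n - 1) - i" "w + (n - 1) - i < n"
      "Suc (w + (n - 1) - i) = w + n - i" "w + n - i < n"
      using 2 w by linarith+
    ultimately show ?thesis using 2 by (simp add: snoc_snoc_perm_apply bump_def)
  next
    case 3
    with fixed w show ?thesis by (simp add: snoc_snoc_perm_apply bump_def)
  next
    case 4
    with w show ?thesis by (simp add: snoc_perm_apply bump_def)
  next
    case 5
    with w show ?thesis by simp
  qed
qed

lemma involution_snoc_snoc_perm_fixed:
  assumes \<sigma>: "\<sigma> permutes {1..n}" "is_involution_on \<sigma> {1..n}" and fixed: "\<sigma> n = n"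
    and rev: "tail_reversed \<sigma> (n - 1)" and n: "2 \<le> n"
  shows "is_involution_on (snoc_perm (snoc_perm \<sigma> n (\<sigma> (n - 1))) (Suc n) n) {1..Suc (Suc n)}"
proof -
  define w where "w = \<sigma> (n - 1)"
  let ?\<pi> = "snoc_perm (snoc_perm \<sigma> n w) (Suc n) n"
  have w: "\<sigma> (n - 1) = w" "1 \<le> w" "w < n" "\<sigma> w = n - 1"
    using involution_fixed_last_prev[OF \<sigma> fixed n] by (simp_all add: w_def)
  note val = snoc_snoc_perm_fixed_apply[OF fixed w rev]
  have "is_involution_on ?\<pi> {1..Suc (Suc n)}"
  proof (rule involution_on_glue[OF \<sigma>])
    show "w \<le> Suc n" using w by simp
    have up: "w \<le> \<sigma> j" if "j \<in> {w..n}" for j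
      using that tail_reversedD[OF rev, of j] w(1) fixed by (cases "j = n") auto
    show "\<sigma> i < w \<and> ?\<pi> i = \<sigma> i" if "1 \<le> i" "i < w" for i
      using involution_maps_below[OF \<sigma> up that] that w
      by (simp add: snoc_snoc_perm_apply bump_def)
    show "?\<pi> i \<in> {w..Suc (Suc n)} \<and> ?\<pi> (?\<pi> i) = i" if i: "i \<in> {w..Suc (Suc n)}" for i
    proof -
      have "?\<pi> i \<in> {w..Suc (Suc n)}" using val[OF i] i w(2-4) by auto
      then show ?thesis using val[OF i] val[of "?\<pi> i"] i w(2-4) by auto
    qed
  qed
  then show ?thesis by (simp add: w_def)
qed

lemma finite_jset_perms: "finite (jset_perms n E)"
  using finite_perms by (simp add: jset_perms_def)

lemma jset_perms_full_double_snoc_witness: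
  assumes \<sigma>: "\<sigma> \<in> jset_perms n {0..n}" and n: "2 \<le> n"
  shows "\<not> is_involution_on (snoc_perm \<sigma> n (if \<sigma> n < n then n else \<sigma> (n - 1))) {1..Suc n} \<and>
    is_involution_on (snoc_perm (snoc_perm \<sigma> n (if \<sigma> n < n then n else \<sigma> (n - 1))) (Suc n) (\<sigma> n))
      {1..Suc (Suc n)}"
proof -
  have n1: "1 \<le> n" using n by simp
  note full = jset_perms_fullD[OF \<sigma> n1]
  show ?thesis
  proof (cases "\<sigma> n < n")
    case True
    then show ?thesis
      using involution_snoc_perm_iff[OF full(1,2) n1, of n] involution_snoc_snoc_perm_lt[OF full True]
      by simp
  next
    case False
    then have fixed: "\<sigma> n = n" using perm_bounds[OF full(1), of n] n1 by simp
    have "tail_reversed \<sigma> (n - 1)"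
      using jset_perms_full_fixed_last[of \<sigma> "n - 1"] \<sigma> fixed n by simp
    then show ?thesis
      using involution_snoc_perm_iff[OF full(1,2) n1, of "\<sigma> (n - 1)"]
        involution_snoc_snoc_perm_fixed[OF full(1,2) fixed _ n]
        involution_fixed_last_prev[OF full(1,2) fixed n] fixed
      by simp
  qed
qed

lemma jset_perms_full_double_snoc:
  assumes \<sigma>: "\<sigma> \<in> jset_perms n {0..n}" and n: "2 \<le> n"
  shows "{r \<in> {1..Suc n}. \<not> is_involution_on (snoc_perm \<sigma> n r) {1..Suc n} \<and>
      (\<exists>s \<in> {1..Suc (Suc n)}. is_involution_on (snoc_perm (snoc_perm \<sigma> n r) (Suc n) s) {1..Suc (Suc n)})}
    = {if \<sigma> n < n then n else \<sigma> (n - 1)}"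
    (is "?R = {?r}")
proof -
  have n1: "1 \<le> n" using n by simp
  note full = jset_perms_fullD[OF \<sigma> n1]
  have "1 \<le> \<sigma> n" "\<sigma> n \<le> n" "1 \<le> \<sigma> (n - 1)" "\<sigma> (n - 1) \<le> n"
    using perm_bounds[OF full(1), of n] perm_bounds[OF full(1), of "n - 1"] n by auto
  then have "?r \<in> {1..Suc n}" "\<sigma> n \<in> {1..Suc (Suc n)}" by auto
  with jset_perms_full_double_snoc_witness[OF \<sigma> n] have "?r \<in> ?R" by blast
  moreover have "r = ?r" if "r \<in> ?R" for r
  proof -
    from that obtain s where r: "r \<in> {1..Suc n}" and s: "s \<in> {1..Suc (Suc n)}"
      and ninv: "\<not> is_involution_on (snoc_perm \<sigma> n r) {1..Suc n}"
      and inv: "is_involution_on (snoc_perm (snoc_perm \<sigma> n r) (Suc n) s) {1..Suc (Suc n)}"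
      by blast
    have sr: "s = \<sigma> n" "r \<le> n"
      using involution_snoc_snoc_perm_last_entry[OF full(1,2) r s ninv inv] by auto
    have "r \<noteq> \<sigma> n"
      using ninv involution_snoc_perm_tail[OF full n1] by auto
    then show "r = ?r"
      using involution_snoc_snoc_perm_first_entry[OF full n _ sr(2)] r inv sr(1) by simp
  qed
  ultimately show ?thesis by blast
qed

lemma card_jset_perms_gap_before_last:
  assumes n: "2 \<le> n"
  shows "card (jset_perms (Suc (Suc n)) ({0..Suc (Suc n)} - {Suc n})) = card (jset_perms n {0..n})"
proof -
  let ?E = "{0..Suc (Suc n)} - {Suc n}"
  let ?inv_ext = "\<lambda>\<rho>. \<exists>s \<in> {1..Suc (Suc n)}. is_involution_on (snoc_perm \<rho> (Suc n) s) {1..Suc (Suc n)}"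
  have E: "?E - {Suc (Suc n)} = {0..n}" by auto
  have "card (jset_perms (Suc (Suc n)) ?E) = (\<Sum>\<rho>\<in>jset_perms (Suc n) {0..n}.
      card {s \<in> {1..Suc (Suc n)}. is_involution_on (snoc_perm \<rho> (Suc n) s) {1..Suc (Suc n)}})"
    using card_jset_perms_Suc_filter[of "Suc n" ?E "\<lambda>_. True"] E by simp
  also have "\<dots> = (\<Sum>\<rho>\<in>jset_perms (Suc n) {0..n}. if ?inv_ext \<rho> then 1 else 0)"
  proof (rule sum.cong[OF refl])
    fix \<rho> assume "\<rho> \<in> jset_perms (Suc n) {0..n}"
    then have \<rho>: "\<rho> permutes {1..Suc n}" and "Suc n \<notin> jset (Suc n) \<rho>"
      by (auto simp: jset_perms_def perms_def)
    then have "\<not> is_involution_on \<rho> {1..Suc n}" using last_in_jset_iff[OF \<rho>] by simp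
    then show "card {s \<in> {1..Suc (Suc n)}. is_involution_on (snoc_perm \<rho> (Suc n) s) {1..Suc (Suc n)}} =
        (if ?inv_ext \<rho> then 1 else 0)"
      by (rule card_involution_snoc_perms_of_noninvolution[OF \<rho>])
  qed
  also have "\<dots> = card {\<rho> \<in> jset_perms (Suc n) {0..n}. ?inv_ext \<rho>}"
    using sum.inter_filter[OF finite_jset_perms, of "\<lambda>_. 1::nat"] by simp
  also have "\<dots> = (\<Sum>\<sigma>\<in>jset_perms n {0..n}. card {r \<in> {1..Suc n}.
      \<not> is_involution_on (snoc_perm \<sigma> n r) {1..Suc n} \<and> ?inv_ext (snoc_perm \<sigma> n r)})"
    using card_jset_perms_Suc_filter[of n "{0..n}" ?inv_ext] by simp
  also have "\<dots> = (\<Sum>\<sigma>\<in>jset_perms n {0..n}. 1)"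
    using jset_perms_full_double_snoc n by (intro sum.cong) simp_all
  finally show ?thesis by simp
qed

lemma card_jset_perms_gap:
  assumes m: "3 \<le> m" and N: "Suc m \<le> N"
  shows "card (jset_perms N ({0..N} - {m})) = (if N = Suc m then 2 ^ (N - 3) else 2 ^ (N - 4))"
  using N
proof (induction N rule: nat_induct_at_least)
  case base
  obtain n where "m = Suc n" and n: "2 \<le> n" using m by (cases m) auto
  then show ?case
    using card_jset_perms_gap_before_last[OF n] card_jset_perms_full[of n] by simp
next
  case (Suc N)
  let ?E = "{0..Suc N} - {m}"
  have N: "Suc N \<noteq> m" "N \<noteq> m" "1 \<le> N" "4 \<le> N" using Suc.hyps m by simp_all
  then have E: "Suc N \<in> ?E" "N \<in> ?E" by simp_all
  have E': "?E - {Suc N} = {0..N} - {m}" by auto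
  have "N - 1 \<le> Suc N" by linarith
  then have "N - 1 \<in> ?E \<longleftrightarrow> N - 1 \<noteq> m" by simp
  also have "\<dots> \<longleftrightarrow> N \<noteq> Suc m" using N by arith
  finally have "card (jset_perms (Suc N) ?E) =
      (if N = Suc m then 1 else 2) * card (jset_perms N ({0..N} - {m}))"
    using card_jset_perms_Suc[OF E N(3)] E' by simp
  also have "\<dots> = 2 ^ (Suc N - 4)"
  proof (cases "N = Suc m")
    case True
    with Suc.IH N show ?thesis by (simp add: numeral_eq_Suc)
  next
    case False
    with Suc.IH N have "Suc N - 4 = Suc (N - 4)" by simp
    with False Suc.IH show ?thesis by simp
  qed
  finally show ?case using N by simp
qed

theorem mainTheorem13:
  fixes k :: nat and E :: "nat set"
  assumes "k \<ge> 5"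
    and "{0, 1, 2, k} \<subseteq> E" and "E \<subset> {0..k}" and "card E = k"
  shows "card {\<tau>. \<tau> permutes {1..k} \<and> jset k \<tau> = E} =
           (if k - 1 \<notin> E then 2 ^ (k - 3) else 2 ^ (k - 4))"
proof -
  have "card ({0..k} - E) = 1"
    using assms(3,4) finite_subset[of E "{0..k}"] by (simp add: card_Diff_subset)
  then obtain m where m: "{0..k} - E = {m}" by (rule card_1_singletonE)
  then have E: "E = {0..k} - {m}" using assms(3) by blast
  have "m \<in> {0..k} - E" using m by simp
  then have "m \<notin> E" "m \<le> k" by simp_all
  with assms(2) have "m \<notin> {0, 1, 2, k}" "m \<le> k" by blast+
  then have "3 \<le> m" "m < k" by (auto simp: eval_nat_numeral)
  have "k - 1 \<notin> E \<longleftrightarrow> k - 1 = m" using E by simp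
  also have "\<dots> \<longleftrightarrow> k = Suc m" using \<open>m < k\<close> by arith
  finally have "k - 1 \<notin> E \<longleftrightarrow> k = Suc m" .
  moreover have "{\<tau>. \<tau> permutes {1..k} \<and> jset k \<tau> = E} = jset_perms k ({0..k} - {m})"
    using E by (simp add: jset_perms_def perms_def)
  ultimately show ?thesis using card_jset_perms_gap[OF \<open>3 \<le> m\<close>] \<open>m < k\<close> by simp
qed

end
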